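(* Let $\bar\eta>0$ be a constant such that $\eta^{(l)}_e(t)\le\bar\eta$ for all $e,t,l$ at every optimizer of the reformulated problem, and consider problem (P4') built with this $\bar\eta$. Then there exists a scalar $\bar\vartheta$ such that $|\vartheta^{(l)}_e(t)|\le\bar\vartheta$ for all $e\in\mathcal E$, $t\in\mathcal T$, $l\in\mathcal L$ (at every feasible point of (P4')).
   Context: Data: integers $n,T,N\ge1$, $\mathcal E=\{1,\dots,n\}$, $\mathcal T=\{0,\dots,T-1\}$, $\mathcal L=\{1,\dots,N\}$, $\mathcal O=\{1,\dots,m\}$; speed-limit values $0<\gamma^{(1)}<\dots<\gamma^{(m)}$; for each $e$: $h_e>0$, $\bar\rho_e>0$, $\bar f_e>0$, $\bar u_e>0$ with $\bar u_e\bar\rho_e>\bar f_e$, $\tau_e=\bar f_e/(\bar u_e\bar\rho_e-\bar f_e)$; constants $\bar\eta>0$, $\epsilon(\beta)>0$; sample data $\omega^{(l)}(t)\ge0$, $\rho^{(l)}_e(0)\ge0$, $\kappa^{(l)}_e(t)=\frac{1-r^{o,(l)}_{e-1}(t)}{1-r^{in,(l)}_e(t)}$ with $r^{o,(l)},r^{in,(l)}\in[0,1)$. Problem (P4'): maximize $-\lambda\epsilon(\beta)-\frac1N\sum_{e,t,l}\bar f_e\bar\rho_e\eta^{(l)}_e(t)+\frac1N\sum_{e,t,l}(\vartheta^{(l)}_e(t))^2$ over $x_{e,i}(t),y^{(l)}_{e,i}(t),z^{(l)}_{e,i}(t),\rho^{(l)}_e(t),\lambda,\mu^{(l)}_e(t),\nu^{(l)}_e(t),\eta^{(l)}_e(t),\vartheta^{(l)}_e(t)$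 subject to, for all $e,i,t,l$: $(\vartheta^{(l)}_e(t))^2\le\nu^{(l)}_e(t)\rho^{(l)}_e(t)$; $x_{e,i}(t)\in\{0,1\}$, $\sum_ix_{e,i}(t)=1$, $\gamma^{(1)}\le\sum_i\gamma^{(i)}x_{e,i}(t)\le\gamma^{(m)}$; $0\le z^{(l)}_{e,i}(t)\le\bar\eta x_{e,i}(t)$, $\eta^{(l)}_e(t)-\bar\eta(1-x_{e,i}(t))\le z^{(l)}_{e,i}(t)\le\eta^{(l)}_e(t)$, $0\le y^{(l)}_{e,i}(t)\le\bar\rho_ex_{e,i}(t)$, $\rho^{(l)}_e(t)-\bar\rho_e(1-x_{e,i}(t))\le y^{(l)}_{e,i}(t)\le\rho^{(l)}_e(t)$; $\rho^{(l)}_1(t+1)=\rho^{(l)}_1(t)+h_1\omega^{(l)}(t)-h_1\sum_i\gamma^{(i)}y^{(l)}_{1,i}(t)$; for $e\ge2$: $\rho^{(l)}_e(t+1)=\rho^{(l)}_e(t)+h_e\kappa^{(l)}_e(t)\sum_i\gamma^{(i)}y^{(l)}_{e-1,i}(t)-h_e\sum_i\gamma^{(i)}y^{(l)}_{e,i}(t)$ and $\kappa^{(l)}_e(t)\sum_i\gamma^{(i)}y^{(l)}_{e-1,i}(t)\le\min\{\bar f_e,\tau_e\bar u_e(\bar\rho_e-\rho^{(l)}_e(t))\}$; $\rho^{(l)}_e(0)$ equal to the sample data; $\sum_i\gamma^{(i)}(\bar\rho_e-\bar f_e/\bar u_e)z^{(l)}_{e,i}(t)-\mu^{(l)}_e(t)+\bar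 f_e\eta^{(l)}_e(t)\ge0$; $\nu^{(l)}_e(t)=\mu^{(l)}_e(t)+\frac1T\sum_i\gamma^{(i)}x_{e,i}(t)$; $\max_{e,t}|\nu^{(l)}_e(t)|\le\lambda$; $0\le\eta^{(l)}_e(t)\le\bar\eta$. *)

theory Defs
  imports Complex_Main
begin

text \<open>Index sets: links e in {1..n}, speed-limit options i in {1..m},
  time steps t in {0..<T}, samples l in {1..N}.\<close>

definition tau :: "(nat \<Rightarrow> real) \<Rightarrow> (nat \<Rightarrow> real) \<Rightarrow> (nat \<Rightarrow> real) \<Rightarrow> nat \<Rightarrow> real" where
  "tau rhobar fbar ubar e = fbar e / (ubar e * rhobar e - fbar e)"

definition kappa :: "(nat \<Rightarrow> nat \<Rightarrow> nat \<Rightarrow> real) \<Rightarrow> (nat \<Rightarrow> nat \<Rightarrow> nat \<Rightarrow> real)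
    \<Rightarrow> nat \<Rightarrow> nat \<Rightarrow> nat \<Rightarrow> real" where
  "kappa ro rin l e t = (1 - ro l (e - 1) t) / (1 - rin l e t)"

definition feasible_P4' ::
  "nat \<Rightarrow> nat \<Rightarrow> nat \<Rightarrow> nat \<Rightarrow> (nat \<Rightarrow> real) \<Rightarrow>
   (nat \<Rightarrow> real) \<Rightarrow> (nat \<Rightarrow> real) \<Rightarrow> (nat \<Rightarrow> real) \<Rightarrow> (nat \<Rightarrow> real) \<Rightarrow> real \<Rightarrow>
   (nat \<Rightarrow> nat \<Rightarrow> real) \<Rightarrow> (nat \<Rightarrow> nat \<Rightarrow> real) \<Rightarrow>
   (nat \<Rightarrow> nat \<Rightarrow> nat \<Rightarrow> real) \<Rightarrow> (nat \<Rightarrow> nat \<Rightarrow> nat \<Rightarrow> real) \<Rightarrow>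
   (nat \<Rightarrow> nat \<Rightarrow> nat \<Rightarrow> real) \<Rightarrow>
   (nat \<Rightarrow> nat \<Rightarrow> nat \<Rightarrow> nat \<Rightarrow> real) \<Rightarrow> (nat \<Rightarrow> nat \<Rightarrow> nat \<Rightarrow> nat \<Rightarrow> real) \<Rightarrow>
   (nat \<Rightarrow> nat \<Rightarrow> nat \<Rightarrow> real) \<Rightarrow> real \<Rightarrow>
   (nat \<Rightarrow> nat \<Rightarrow> nat \<Rightarrow> real) \<Rightarrow> (nat \<Rightarrow> nat \<Rightarrow> nat \<Rightarrow> real) \<Rightarrow>
   (nat \<Rightarrow> nat \<Rightarrow> nat \<Rightarrow> real) \<Rightarrow> (nat \<Rightarrow> nat \<Rightarrow> nat \<Rightarrow> real) \<Rightarrow> bool" where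
  "feasible_P4' n T N m gamma h rhobar fbar ubar etabar omega rho0 ro rin
     x y z rho lam mu nu eta theta \<longleftrightarrow>
   (\<forall>e\<in>{1..n}. \<forall>t\<in>{0..<T}.
      (\<forall>i\<in>{1..m}. x e i t \<in> {0, 1}) \<and>
      (\<Sum>i=1..m. x e i t) = 1 \<and>
      gamma 1 \<le> (\<Sum>i=1..m. gamma i * x e i t) \<and>
      (\<Sum>i=1..m. gamma i * x e i t) \<le> gamma m) \<and>
   (\<forall>l\<in>{1..N}. \<forall>e\<in>{1..n}. \<forall>t\<in>{0..<T}.
      (theta l e t)\<^sup>2 \<le> nu l e t * rho l e t \<and>
      (\<forall>i\<in>{1..m}.
         0 \<le> z l e i t \<and> z l e i t \<le> etabar * x e i t \<and>
         eta l e t - etabar * (1 - x e i t) \<le> z l e i t \<and> z l e i t \<le> eta l e t \<and>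
         0 \<le> y l e i t \<and> y l e i t \<le> rhobar e * x e i t \<and>
         rho l e t - rhobar e * (1 - x e i t) \<le> y l e i t \<and> y l e i t \<le> rho l e t) \<and>
      (e = 1 \<longrightarrow> rho l 1 (t + 1) = rho l 1 t + h 1 * omega l t
                    - h 1 * (\<Sum>i=1..m. gamma i * y l 1 i t)) \<and>
      (2 \<le> e \<longrightarrow>
         rho l e (t + 1) = rho l e t
           + h e * kappa ro rin l e t * (\<Sum>i=1..m. gamma i * y l (e - 1) i t)
           - h e * (\<Sum>i=1..m. gamma i * y l e i t) \<and>
         kappa ro rin l e t * (\<Sum>i=1..m. gamma i * y l (e - 1) i t)
           \<le> min (fbar e) (tau rhobar fbar ubar e * ubar e * (rhobar e - rho l e t))) \<and>
      (\<Sum>i=1..m. gamma i * (rhobar e - fbar e / ubar e) * z l e i t)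
           - mu l e t + fbar e * eta l e t \<ge> 0 \<and>
      nu l e t = mu l e t + (1 / real T) * (\<Sum>i=1..m. gamma i * x e i t) \<and>
      \<bar>nu l e t\<bar> \<le> lam \<and>
      0 \<le> eta l e t \<and> eta l e t \<le> etabar) \<and>
   (\<forall>l\<in>{1..N}. \<forall>e\<in>{1..n}. rho l e 0 = rho0 l e)"

end

theory Submission
  imports Defs
begin

text \<open>The rotated-cone constraint \<open>\<theta>\<^sup>2 \<le> \<nu> \<rho>\<close> bounds \<open>\<theta>\<close> once \<open>\<nu>\<close> is bounded
  above and \<open>\<rho>\<close> lies in a bounded interval. At the active speed limit the big-M
  constraints confine the density to \<open>[0, rhobar e]\<close>. In \<open>\<nu> = \<mu> + (1/T) \<Sigma> \<gamma> x\<close>, the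
  dual variable \<open>\<mu>\<close> is dominated by a combination of \<open>z \<le> \<eta>\<close> and \<open>\<eta>\<close>, both at most
  the constant \<open>etabar\<close>, and the selected speed limit is at most \<open>gamma m\<close>.\<close>

lemma abs_le_sqrt_if_square_le_mult:
  fixes \<theta> \<nu> \<rho> U R :: real
  assumes "\<theta>\<^sup>2 \<le> \<nu> * \<rho>" and "\<nu> \<le> U" and "0 \<le> U"
    and "0 \<le> \<rho>" and "\<rho> \<le> R"
  shows "\<bar>\<theta>\<bar> \<le> sqrt (U * R)"
proof -
  have "\<nu> * \<rho> \<le> U * R"
  proof (cases "0 \<le> \<nu>")
    case True
    then show ?thesis using assms by (intro mult_mono) auto
  next
    case False
    then have "\<nu> * \<rho> \<le> 0" using assms(4) by (simp add: mult_nonpos_nonneg)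
    also have "0 \<le> U * R" using assms(3-5) by simp
    finally show ?thesis .
  qed
  then have "\<theta>\<^sup>2 \<le> U * R" using assms(1) by linarith
  then show ?thesis using real_sqrt_le_mono by fastforce
qed

lemma ex_eq_1_if_binary_sum_eq_1:
  fixes x :: "'a \<Rightarrow> real"
  assumes "\<forall>i\<in>A. x i \<in> {0, 1}" and "sum x A = 1"
  shows "\<exists>i\<in>A. x i = 1"
proof (rule ccontr)
  assume "\<not> (\<exists>i\<in>A. x i = 1)"
  with assms(1) have "sum x A = 0" by (intro sum.neutral) auto
  with assms(2) show False by simp
qed

lemma feasible_P4'_speed_limitD:
  assumes "feasible_P4' n T N m gamma h rhobar fbar ubar etabar omega rho0 ro rin
             x y z rho lam mu nu eta theta"
    and "e \<in> {1..n}" and "t \<in> {0..<T}"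
  shows "\<forall>i\<in>{1..m}. x e i t \<in> {0, 1}" and "(\<Sum>i=1..m. x e i t) = 1"
    and "(\<Sum>i=1..m. gamma i * x e i t) \<le> gamma m"
  using assms(1)[unfolded feasible_P4'_def, THEN conjunct1, rule_format, OF assms(2,3)]
  by blast+

lemma feasible_P4'_cellD:
  assumes "feasible_P4' n T N m gamma h rhobar fbar ubar etabar omega rho0 ro rin
             x y z rho lam mu nu eta theta"
    and "l \<in> {1..N}" and "e \<in> {1..n}" and "t \<in> {0..<T}"
  shows "(theta l e t)\<^sup>2 \<le> nu l e t * rho l e t"
    and "\<forall>i\<in>{1..m}. 0 \<le> z l e i t \<and> z l e i t \<le> eta l e t"
    and "\<forall>i\<in>{1..m}. 0 \<le> y l e i t \<and> y l e i t \<le> rho l e t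
           \<and> rho l e t - rhobar e * (1 - x e i t) \<le> y l e i t \<and> y l e i t \<le> rhobar e * x e i t"
    and "mu l e t \<le> (\<Sum>i=1..m. gamma i * (rhobar e - fbar e / ubar e) * z l e i t)
           + fbar e * eta l e t"
    and "nu l e t = mu l e t + (1 / real T) * (\<Sum>i=1..m. gamma i * x e i t)"
    and "0 \<le> eta l e t" and "eta l e t \<le> etabar"
  using assms(1)[unfolded feasible_P4'_def, THEN conjunct2, THEN conjunct1, rule_format,
      OF assms(2-4)]
  by (elim conjE; (blast | linarith))+

lemma feasible_P4'_density_bounds:
  assumes "feasible_P4' n T N m gamma h rhobar fbar ubar etabar omega rho0 ro rin
             x y z rho lam mu nu eta theta"
    and "l \<in> {1..N}" and "e \<in> {1..n}" and "t \<in> {0..<T}"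
  shows "0 \<le> rho l e t" and "rho l e t \<le> rhobar e"
proof -
  obtain i where i: "i \<in> {1..m}" and active: "x e i t = 1"
    using ex_eq_1_if_binary_sum_eq_1[OF feasible_P4'_speed_limitD(1,2)[OF assms(1,3,4)]] ..
  have "0 \<le> y l e i t" "y l e i t \<le> rho l e t"
    "rho l e t - rhobar e * (1 - x e i t) \<le> y l e i t" "y l e i t \<le> rhobar e * x e i t"
    using feasible_P4'_cellD(3)[OF assms] i by blast+
  with active show "0 \<le> rho l e t" and "rho l e t \<le> rhobar e" by simp_all
qed

definition nu_bound ::
  "nat \<Rightarrow> (nat \<Rightarrow> real) \<Rightarrow> (nat \<Rightarrow> real) \<Rightarrow> (nat \<Rightarrow> real) \<Rightarrow> (nat \<Rightarrow> real) \<Rightarrow> real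
     \<Rightarrow> nat \<Rightarrow> real" where
  "nu_bound m gamma rhobar fbar ubar etabar e =
     (\<Sum>i=1..m. \<bar>gamma i * (rhobar e - fbar e / ubar e)\<bar>) * etabar
       + \<bar>fbar e\<bar> * etabar + \<bar>gamma m\<bar>"

lemma nu_bound_nonneg:
  "0 \<le> etabar \<Longrightarrow> 0 \<le> nu_bound m gamma rhobar fbar ubar etabar e"
  unfolding nu_bound_def by (intro add_nonneg_nonneg mult_nonneg_nonneg sum_nonneg) auto

lemma feasible_P4'_nu_le_nu_bound:
  assumes "feasible_P4' n T N m gamma h rhobar fbar ubar etabar omega rho0 ro rin
             x y z rho lam mu nu eta theta"
    and "l \<in> {1..N}" and "e \<in> {1..n}" and "t \<in> {0..<T}"
  shows "nu l e t \<le> nu_bound m gamma rhobar fbar ubar etabar e"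
proof -
  let ?c = "rhobar e - fbar e / ubar e"
  let ?speed = "\<Sum>i=1..m. gamma i * x e i t"
  have z: "\<forall>i\<in>{1..m}. 0 \<le> z l e i t \<and> z l e i t \<le> eta l e t"
    and eta: "0 \<le> eta l e t" "eta l e t \<le> etabar"
    and mu: "mu l e t \<le> (\<Sum>i=1..m. gamma i * ?c * z l e i t) + fbar e * eta l e t"
    and nu: "nu l e t = mu l e t + (1 / real T) * ?speed"
    using feasible_P4'_cellD(2,6,7,4,5)[OF assms] by blast+
  have speed: "?speed \<le> gamma m"
    using feasible_P4'_speed_limitD(3)[OF assms(1,3,4)] .
  have "(\<Sum>i=1..m. gamma i * ?c * z l e i t) \<le> (\<Sum>i=1..m. \<bar>gamma i * ?c\<bar> * etabar)"
  proof (rule sum_mono)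
    fix i assume "i \<in> {1..m}"
    with z eta have "0 \<le> z l e i t" "z l e i t \<le> etabar" by fastforce+
    then have "gamma i * ?c * z l e i t \<le> \<bar>gamma i * ?c\<bar> * z l e i t"
      by (intro mult_right_mono) simp_all
    also have "\<dots> \<le> \<bar>gamma i * ?c\<bar> * etabar"
      using \<open>z l e i t \<le> etabar\<close> by (intro mult_left_mono) simp_all
    finally show "gamma i * ?c * z l e i t \<le> \<bar>gamma i * ?c\<bar> * etabar" .
  qed
  moreover have "fbar e * eta l e t \<le> \<bar>fbar e\<bar> * etabar"
    using eta by (intro mult_mono) simp_all
  moreover have "(1 / real T) * ?speed \<le> \<bar>gamma m\<bar>"
  proof (cases "0 \<le> ?speed")
    case True
    have "real T \<ge> 1" using assms(4) by simp
    then have "(1 / real T) * ?speed \<le> ?speed"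
      using True by (intro mult_left_le_one_le) auto
    then show ?thesis using speed by linarith
  next
    case False
    then have "(1 / real T) * ?speed \<le> 0" by (intro mult_nonneg_nonpos) auto
    then show ?thesis by linarith
  qed
  ultimately show ?thesis
    using mu nu unfolding nu_bound_def sum_distrib_right by linarith
qed

theorem lemma5:
  fixes n T N m :: nat
    and gamma h rhobar fbar ubar :: "nat \<Rightarrow> real"
    and etabar :: real
    and omega rho0 :: "nat \<Rightarrow> nat \<Rightarrow> real"
    and ro rin :: "nat \<Rightarrow> nat \<Rightarrow> nat \<Rightarrow> real"
  assumes "n \<ge> 1" and "T \<ge> 1" and "N \<ge> 1" and "m \<ge> 1"
    and "0 < gamma 1"
    and "\<And>i j. i \<in> {1..m} \<Longrightarrow> j \<in> {1..m} \<Longrightarrow> i < j \<Longrightarrow> gamma i < gamma j"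
    and "\<And>e. e \<in> {1..n} \<Longrightarrow> h e > 0 \<and> rhobar e > 0 \<and> fbar e > 0 \<and> ubar e > 0
            \<and> ubar e * rhobar e > fbar e"
    and "etabar > 0"
    and "\<And>l t. l \<in> {1..N} \<Longrightarrow> t \<in> {0..<T} \<Longrightarrow> omega l t \<ge> 0"
    and "\<And>l e. l \<in> {1..N} \<Longrightarrow> e \<in> {1..n} \<Longrightarrow> rho0 l e \<ge> 0"
    and "\<And>l e t. 0 \<le> ro l e t \<and> ro l e t < 1"
    and "\<And>l e t. 0 \<le> rin l e t \<and> rin l e t < 1"
  shows "\<exists>thetabar :: real. \<forall>x y z rho lam mu nu eta theta.
           feasible_P4' n T N m gamma h rhobar fbar ubar etabar omega rho0 ro rin
             x y z rho lam mu nu eta theta \<longrightarrow>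
           (\<forall>e\<in>{1..n}. \<forall>t\<in>{0..<T}. \<forall>l\<in>{1..N}. \<bar>theta l e t\<bar> \<le> thetabar)"
proof -
  define bound where
    "bound e = sqrt (nu_bound m gamma rhobar fbar ubar etabar e * rhobar e)" for e
  have "\<bar>theta l e t\<bar> \<le> Max (bound ` {1..n})"
    if feasible: "feasible_P4' n T N m gamma h rhobar fbar ubar etabar omega rho0 ro rin
                    x y z rho lam mu nu eta theta"
      and e: "e \<in> {1..n}" and t: "t \<in> {0..<T}" and l: "l \<in> {1..N}"
    for x y z rho lam mu nu eta theta e t l
  proof -
    have "\<bar>theta l e t\<bar> \<le> bound e"
      unfolding bound_def
      using feasible_P4'_nu_le_nu_bound[OF feasible l e t] nu_bound_nonneg \<open>etabar > 0\<close>
        feasible_P4'_density_bounds[OF feasible l e t]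
        feasible_P4'_cellD(1)[OF feasible l e t]
      by (intro abs_le_sqrt_if_square_le_mult) auto
    also have "\<dots> \<le> Max (bound ` {1..n})" using e by simp
    finally show ?thesis .
  qed
  then show ?thesis by blast
qed

end
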